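(* Let $n,k$ be positive integers with $n\ge k$. The integer $|u(n,k)|$ is the number of ordered pairs $(\sigma,\tau)$ of permutations of $[n]=\{1,\dots,n\}$, each having $k$ cycles, such that $\min(\sigma)=\min(\tau)$.
   Context: The central factorial numbers of the first kind with even indices $u(n,k)=t(2n,2k)$ satisfy $u(0,0)=1$, $u(n,k)=0$ if $k\notin\{1,\dots,n\}$ (for $(n,k)\ne(0,0)$), and $u(n,k)=u(n-1,k-1)-(n-1)^2u(n-1,k)$ for $n,k\ge1$; equivalently $\prod_{i=0}^{n-1}(x-i^2)=\sum_k u(n,k)x^k$. For a permutation $\sigma$ of $[n]$, $\min(\sigma)$ denotes the set of cyclic minima, i.e. the set of minimal elements of the cycles of $\sigma$. *)

theory Defs
  imports "HOL-Combinatorics.Combinatorics"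
begin

text \<open>Central factorial numbers of the first kind with even indices, u(n,k) = t(2n,2k).\<close>
fun u :: "nat \<Rightarrow> nat \<Rightarrow> int" where
  "u 0 k = (if k = 0 then 1 else 0)"
| "u (Suc n) 0 = 0"
| "u (Suc n) (Suc k) = u n k - (int n)^2 * u n (Suc k)"

definition perm_cycles :: "nat \<Rightarrow> (nat \<Rightarrow> nat) \<Rightarrow> nat set set" where
  "perm_cycles n \<sigma> = (\<lambda>i. orbit \<sigma> i) ` {1..n}"

definition num_cycles :: "nat \<Rightarrow> (nat \<Rightarrow> nat) \<Rightarrow> nat" where
  "num_cycles n \<sigma> = card (perm_cycles n \<sigma>)"

definition cyc_min :: "nat \<Rightarrow> (nat \<Rightarrow> nat) \<Rightarrow> nat set" where
  "cyc_min n \<sigma> = Min ` perm_cycles n \<sigma>"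

end

theory Submission
  imports Defs
begin

text \<open>
  Let \<open>F n M\<close> count the permutations of \<open>{1..n}\<close> whose set of cyclic minima is \<open>M\<close>.
  A permutation of \<open>{1..n+1}\<close> either fixes \<open>n+1\<close>, which is then a cyclic minimum, or
  arises in exactly one way from a permutation of \<open>{1..n}\<close> by inserting \<open>n+1\<close> right after
  some \<open>j \<le> n\<close> in its cycle, which leaves all cyclic minima unchanged. Hence
  \<open>F (n+1) (insert (n+1) M) = F n M\<close>, and \<open>F (n+1) M = n * F n M\<close> when \<open>n+1 \<notin> M\<close>.
  The number of pairs to be counted is \<open>G n k\<close>, the sum of \<open>(F n M)\<^sup>2\<close> over the \<open>k\<close>-subsets
  \<open>M\<close> of \<open>{1..n}\<close>; so \<open>G (n+1) (k+1) = G n k + n\<^sup>2 * G n (k+1)\<close>, which is the recurrence of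
  \<open>(-1)^(n+k) * u n k\<close>.
\<close>

lemma Min_eq_if_subset_insert_greater:
  fixes B :: "'a::linorder set"
  assumes "finite B" "B \<noteq> {}" "B \<subseteq> A" "A \<subseteq> insert p B" "\<forall>b\<in>B. b < p"
  shows "Min A = Min B"
proof (cases "p \<in> A")
  case True
  then have "A = insert p B" using assms(3,4) by auto
  moreover have "Min B < p" using assms(1,2,5) Min_in by blast
  ultimately show ?thesis using assms(1,2) by simp
next
  case False
  then show ?thesis using assms(3,4) by (simp add: subset_antisym subset_insert)
qed

lemma sum_subsets_card_Suc_insert:
  assumes "finite A" "a \<notin> A"
  shows "(\<Sum>M | M \<subseteq> insert a A \<and> card M = Suc k. f M)
       = (\<Sum>M | M \<subseteq> A \<and> card M = k. f (insert a M))
       + (\<Sum>M | M \<subseteq> A \<and> card M = Suc k. f M)"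
proof -
  let ?S = "\<lambda>A k. {M. M \<subseteq> A \<and> card M = k}"
  have fin: "finite (?S A k)" for k
    by (rule finite_subset[of _ "Pow A"]) (use assms(1) in auto)
  have split: "?S (insert a A) (Suc k) = insert a ` ?S A k \<union> ?S A (Suc k)"
  proof (intro set_eqI iffI)
    fix M assume M: "M \<in> ?S (insert a A) (Suc k)"
    then have "finite M" using assms(1) finite_subset by (metis finite_insert mem_Collect_eq)
    then show "M \<in> insert a ` ?S A k \<union> ?S A (Suc k)"
      using M assms(2) by (cases "a \<in> M") (auto intro!: image_eqI[of _ _ "M - {a}"])
  next
    fix M assume "M \<in> insert a ` ?S A k \<union> ?S A (Suc k)"
    then show "M \<in> ?S (insert a A) (Suc k)"
    proof
      assume "M \<in> insert a ` ?S A k"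
      then obtain M' where "M = insert a M'" "M' \<subseteq> A" "card M' = k" by blast
      moreover have "finite M'" "a \<notin> M'" using calculation(2) assms finite_subset by auto
      ultimately show ?thesis by auto
    qed auto
  qed
  have inj: "inj_on (insert a) (?S A k)"
    using assms(2) by (intro inj_onI) (metis Diff_insert_absorb mem_Collect_eq subsetD)
  have "insert a ` ?S A k \<inter> ?S A (Suc k) = {}" using assms(2) by auto
  then have "sum f (?S (insert a A) (Suc k)) = sum f (insert a ` ?S A k) + sum f (?S A (Suc k))"
    unfolding split using fin by (intro sum.union_disjoint) auto
  also have "sum f (insert a ` ?S A k) = (\<Sum>M\<in>?S A k. f (insert a M))"
    by (simp add: sum.reindex[OF inj])
  finally show ?thesis .
qed

lemma orbit_subset_orbit_compose_transpose:
  assumes "\<sigma> p = p" "x \<noteq> p"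
  shows "orbit \<sigma> x \<subseteq> orbit (\<sigma> \<circ> transpose j p) x"
proof
  let ?\<tau> = "\<sigma> \<circ> transpose j p"
  have \<tau>_step: "?\<tau> z \<in> orbit ?\<tau> x" if "z \<in> insert x (orbit ?\<tau> x)" for z
    using that by (auto intro: orbit_eqI)
  have \<sigma>_step: "\<sigma> y \<in> orbit ?\<tau> x"
    if y: "y \<in> insert x (orbit ?\<tau> x)" and yp: "y = p \<Longrightarrow> p \<in> orbit ?\<tau> x" for y
  proof -
    consider "y = p" | "y = j" "y \<noteq> p" | "y \<noteq> j" "y \<noteq> p" by blast
    then show ?thesis
    proof cases
      case 1
      then show ?thesis using yp assms(1) by simp
    next
      case 2
      then have "?\<tau> y = p" "\<sigma> y = ?\<tau> p" using assms(1) by simp_all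
      then show ?thesis using \<tau>_step[OF insertI2, OF \<tau>_step[OF y]] by simp
    next
      case 3
      then show ?thesis using \<tau>_step[OF y] by simp
    qed
  qed
  fix y assume "y \<in> orbit \<sigma> x"
  then show "y \<in> orbit ?\<tau> x"
  proof induction
    case base
    show ?case using \<sigma>_step[of x] assms(2) by blast
  next
    case (step y)
    then show ?case using \<sigma>_step[of y] by blast
  qed
qed

lemma orbit_compose_transpose_subset:
  assumes "inj \<sigma>" "\<sigma> p = p" "j \<noteq> p" "x \<noteq> p"
  shows "orbit (\<sigma> \<circ> transpose j p) x \<subseteq> insert p (insert x (orbit \<sigma> x))"
proof
  let ?\<tau> = "\<sigma> \<circ> transpose j p" and ?R = "insert x (orbit \<sigma> x)"
  have \<sigma>_ne_p: "\<sigma> y \<noteq> p" if "y \<noteq> p" for y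
    using that assms(1,2) by (metis injD)
  have R_step: "\<sigma> y \<in> orbit \<sigma> x" if "y \<in> ?R" for y
    using that by (auto intro: orbit_eqI)
  \<comment> \<open>\<open>p\<close> is only reached right after \<open>j\<close>, so \<open>p\<close> is replaced by \<open>j\<close> in the invariant\<close>
  have "(if y = p then j else y) \<in> ?R" if "y \<in> orbit ?\<tau> x" for y
    using that
  proof induction
    case base
    show ?case
    proof (cases "x = j")
      case True
      then show ?thesis using assms(2) by simp
    next
      case False
      then have "?\<tau> x = \<sigma> x" "\<sigma> x \<noteq> p" using assms(4) \<sigma>_ne_p by simp_all
      then show ?thesis using R_step[of x] by simp
    qed
  next
    case (step y)
    consider "y = j" | "y = p" | "y \<noteq> j" "y \<noteq> p" by blast
    then show ?case
    proof cases
      case 1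
      then show ?thesis using step.IH assms(2,3) by simp
    next
      case 2
      then have "?\<tau> y = \<sigma> j" "\<sigma> j \<noteq> p" using assms(3) \<sigma>_ne_p by simp_all
      then show ?thesis using step.IH 2 R_step[of j] by simp
    next
      case 3
      then have "?\<tau> y = \<sigma> y" "\<sigma> y \<noteq> p" using \<sigma>_ne_p by simp_all
      then show ?thesis using step.IH 3 R_step[of y] by simp
    qed
  qed
  then show "y \<in> insert p ?R" if "y \<in> orbit ?\<tau> x" for y
    using that by (metis insertCI)
qed

lemma permutes_finite_orbit:
  assumes "\<sigma> permutes S" "finite S" "x \<in> S"
  shows "orbit \<sigma> x \<subseteq> S" "finite (orbit \<sigma> x)" "x \<in> orbit \<sigma> x"
proof -
  show "orbit \<sigma> x \<subseteq> S" by (rule permutes_orbit_subset[OF assms(1,3)])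
  then show "finite (orbit \<sigma> x)" using assms(2) by (rule finite_subset)
  show "x \<in> orbit \<sigma> x"
    using assms(1,2) by (intro permutation_self_in_orbit) (auto simp: permutation_permutes)
qed

lemma permutes_orbit_eq:
  assumes "\<sigma> permutes S" "finite S" "y \<in> orbit \<sigma> x"
  shows "orbit \<sigma> y = orbit \<sigma> x"
  using cyclic_on_orbit[OF assms(1,2)] assms(3) by (simp add: orbit_cyclic_eq3)

lemma cyc_min_subset:
  assumes "\<sigma> permutes {1..n}"
  shows "cyc_min n \<sigma> \<subseteq> {1..n}"
  using permutes_finite_orbit[OF assms finite_atLeastAtMost] Min_in orbit_nonempty
  unfolding cyc_min_def perm_cycles_def by (fastforce simp del: atLeastAtMost_iff)

lemma num_cycles_eq_card_cyc_min:
  assumes "\<sigma> permutes {1..n}"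
  shows "num_cycles n \<sigma> = card (cyc_min n \<sigma>)"
proof -
  have "orbit \<sigma> (Min C) = C" if C: "C \<in> perm_cycles n \<sigma>" for C
  proof -
    obtain i where i: "i \<in> {1..n}" "C = orbit \<sigma> i"
      using C unfolding perm_cycles_def by blast
    then have "Min C \<in> C"
      using permutes_finite_orbit[OF assms finite_atLeastAtMost] orbit_nonempty Min_in by metis
    then show ?thesis using i permutes_orbit_eq[OF assms finite_atLeastAtMost] by simp
  qed
  then have "inj_on Min (perm_cycles n \<sigma>)" by (metis inj_onI)
  then show ?thesis unfolding num_cycles_def cyc_min_def by (simp add: card_image)
qed

lemma cyc_min_Suc_fixed:
  assumes "\<sigma> permutes {1..n}"
  shows "cyc_min (Suc n) \<sigma> = insert (Suc n) (cyc_min n \<sigma>)"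
proof -
  have "\<sigma> (Suc n) = Suc n" using assms by (intro permutes_not_in) auto
  then have "orbit \<sigma> (Suc n) = {Suc n}" by (simp add: orbit_eq_singleton_iff)
  then show ?thesis unfolding cyc_min_def perm_cycles_def by (simp add: atLeastAtMostSuc_conv)
qed

text \<open>\<open>\<sigma> \<circ> transpose j (Suc n)\<close> is \<open>\<sigma>\<close> with \<open>Suc n\<close> inserted right after \<open>j\<close> in its
  cycle.\<close>

lemma permutes_Suc_compose_transpose:
  fixes n :: nat
  assumes "\<sigma> permutes {1..n}" "j \<in> {1..n}"
  shows "\<sigma> \<circ> transpose j (Suc n) permutes {1..Suc n}"
    and "inv (\<sigma> \<circ> transpose j (Suc n)) (Suc n) = j"
proof -
  show \<tau>: "\<sigma> \<circ> transpose j (Suc n) permutes {1..Suc n}"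
    using assms by (intro permutes_compose[OF permutes_swap_id permutes_subset]) auto
  have "(\<sigma> \<circ> transpose j (Suc n)) j = Suc n" using assms(1) by (simp add: permutes_not_in)
  then show "inv (\<sigma> \<circ> transpose j (Suc n)) (Suc n) = j" by (simp add: permutes_inv_eq[OF \<tau>])
qed

lemma permutes_Suc_not_fixedE:
  fixes n :: nat
  assumes "\<tau> permutes {1..Suc n}" "\<tau> (Suc n) \<noteq> Suc n"
  obtains \<sigma> j where "\<sigma> permutes {1..n}" "j \<in> {1..n}" "\<tau> = \<sigma> \<circ> transpose j (Suc n)"
proof -
  define j where "j = inv \<tau> (Suc n)"
  have \<tau>j: "\<tau> j = Suc n" unfolding j_def using permutes_inverses(1)[OF assms(1)] .
  then have "j \<in> {1..Suc n}" "j \<noteq> Suc n"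
    using assms permutes_not_in[OF assms(1), of j] by (auto simp del: atLeastAtMost_iff)
  then have j: "j \<in> {1..n}" by (auto simp: le_Suc_eq)
  have "\<tau> \<circ> transpose j (Suc n) permutes {1..Suc n}"
    using assms(1) j by (intro permutes_compose[OF permutes_swap_id]) auto
  then have "\<tau> \<circ> transpose j (Suc n) permutes {1..n}"
    using \<tau>j by (elim permutes_superset) (auto simp: le_Suc_eq)
  moreover have "\<tau> = \<tau> \<circ> transpose j (Suc n) \<circ> transpose j (Suc n)"
    by (simp add: comp_assoc)
  ultimately show thesis using that j by blast
qed

lemma inj_on_compose_transpose_Suc:
  fixes n :: nat
  shows "inj_on (\<lambda>(\<sigma>, j). \<sigma> \<circ> transpose j (Suc n)) ({\<sigma>. \<sigma> permutes {1..n}} \<times> {1..n})"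
proof (rule inj_onI, clarify)
  fix \<sigma> j \<sigma>' j'
  assume \<sigma>: "\<sigma> permutes {1..n}" "j \<in> {1..n}" and \<sigma>': "\<sigma>' permutes {1..n}" "j' \<in> {1..n}"
    and eq: "\<sigma> \<circ> transpose j (Suc n) = \<sigma>' \<circ> transpose j' (Suc n)"
  have "j = j'"
    using permutes_Suc_compose_transpose(2)[OF \<sigma>] permutes_Suc_compose_transpose(2)[OF \<sigma>'] eq
    by simp
  moreover from this have "\<sigma> = \<sigma>'"
    using arg_cong[OF eq, of "\<lambda>f. f \<circ> transpose j (Suc n)"] by (simp add: comp_assoc)
  ultimately show "\<sigma> = \<sigma>' \<and> j = j'" by simp
qed

lemma cyc_min_Suc_compose_transpose:
  assumes "\<sigma> permutes {1..n}" "j \<in> {1..n}"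
  shows "cyc_min (Suc n) (\<sigma> \<circ> transpose j (Suc n)) = cyc_min n \<sigma>"
proof -
  define p and \<tau> where "p = Suc n" and "\<tau> = \<sigma> \<circ> transpose j p"
  have \<sigma>p: "\<sigma> p = p" using assms(1) unfolding p_def by (intro permutes_not_in) auto
  have \<tau>: "\<tau> permutes {1..Suc n}"
    unfolding \<tau>_def p_def by (rule permutes_Suc_compose_transpose(1)[OF assms])
  have "p \<in> orbit \<tau> j" using \<sigma>p unfolding \<tau>_def by (simp add: orbit_eqI)
  then have orbit_p: "orbit \<tau> p = orbit \<tau> j"
    by (rule permutes_orbit_eq[OF \<tau> finite_atLeastAtMost])
  have Min_orbit: "Min (orbit \<tau> x) = Min (orbit \<sigma> x)" if x: "x \<in> {1..n}" for x
  proof (rule Min_eq_if_subset_insert_greater)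
    note orb = permutes_finite_orbit[OF assms(1) finite_atLeastAtMost x]
    show "orbit \<sigma> x \<subseteq> orbit \<tau> x" "orbit \<tau> x \<subseteq> insert p (orbit \<sigma> x)"
      using orbit_subset_orbit_compose_transpose[of \<sigma> p x j] \<sigma>p x assms(2) orb(3)
        orbit_compose_transpose_subset[OF permutes_inj[OF assms(1)] \<sigma>p, of j x]
      unfolding \<tau>_def p_def by auto
    show "\<forall>b\<in>orbit \<sigma> x. b < p" using orb(1) unfolding p_def by auto
    show "finite (orbit \<sigma> x)" by (rule orb(2))
    show "orbit \<sigma> x \<noteq> {}" by (rule orbit_nonempty)
  qed
  have "cyc_min (Suc n) \<tau> = Min ` orbit \<tau> ` insert p {1..n}"
    unfolding cyc_min_def perm_cycles_def p_def by (simp add: atLeastAtMostSuc_conv)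
  also have "\<dots> = Min ` orbit \<tau> ` {1..n}"
    using orbit_p assms(2) by (simp add: insert_absorb)
  also have "\<dots> = Min ` orbit \<sigma> ` {1..n}"
    unfolding image_image using Min_orbit by (rule image_cong[OF refl])
  finally show ?thesis unfolding \<tau>_def p_def cyc_min_def perm_cycles_def .
qed

lemma Suc_in_cyc_min_iff:
  assumes "\<tau> permutes {1..Suc n}"
  shows "Suc n \<in> cyc_min (Suc n) \<tau> \<longleftrightarrow> \<tau> (Suc n) = Suc n"
proof
  assume "\<tau> (Suc n) = Suc n"
  then have "\<tau> permutes {1..n}" using assms by (elim permutes_superset) (auto simp: le_Suc_eq)
  then show "Suc n \<in> cyc_min (Suc n) \<tau>" by (simp add: cyc_min_Suc_fixed)
next
  assume mem: "Suc n \<in> cyc_min (Suc n) \<tau>"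
  show "\<tau> (Suc n) = Suc n"
  proof (rule ccontr)
    assume "\<tau> (Suc n) \<noteq> Suc n"
    with assms obtain \<sigma> j where \<sigma>: "\<sigma> permutes {1..n}" and j: "j \<in> {1..n}"
      and "\<tau> = \<sigma> \<circ> transpose j (Suc n)"
      by (rule permutes_Suc_not_fixedE)
    then have "cyc_min (Suc n) \<tau> \<subseteq> {1..n}"
      using cyc_min_Suc_compose_transpose[OF \<sigma> j] cyc_min_subset[OF \<sigma>] by simp
    then show False using mem by auto
  qed
qed

definition perms_with_cyc_min :: "nat \<Rightarrow> nat set \<Rightarrow> (nat \<Rightarrow> nat) set" where
  "perms_with_cyc_min n M = {\<sigma>. \<sigma> permutes {1..n} \<and> cyc_min n \<sigma> = M}"

lemma finite_perms_with_cyc_min: "finite (perms_with_cyc_min n M)"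
  unfolding perms_with_cyc_min_def
  by (rule finite_subset[OF _ finite_permutations[of "{1..n}"]]) auto

lemma perms_with_cyc_min_0: "perms_with_cyc_min 0 M = (if M = {} then {id} else {})"
  by (auto simp: perms_with_cyc_min_def cyc_min_def perm_cycles_def)

lemma perms_with_cyc_min_Suc_empty: "perms_with_cyc_min (Suc n) {} = {}"
  by (simp add: perms_with_cyc_min_def cyc_min_def perm_cycles_def)

lemma perms_with_cyc_min_Suc_insert:
  assumes "Suc n \<notin> M"
  shows "perms_with_cyc_min (Suc n) (insert (Suc n) M) = perms_with_cyc_min n M"
proof (intro set_eqI iffI)
  fix \<tau> assume "\<tau> \<in> perms_with_cyc_min (Suc n) (insert (Suc n) M)"
  then have \<tau>: "\<tau> permutes {1..Suc n}" "cyc_min (Suc n) \<tau> = insert (Suc n) M"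
    unfolding perms_with_cyc_min_def by auto
  then have "\<tau> (Suc n) = Suc n" using Suc_in_cyc_min_iff by blast
  then have \<tau>': "\<tau> permutes {1..n}"
    using \<tau>(1) by (elim permutes_superset) (auto simp: le_Suc_eq)
  then have "insert (Suc n) (cyc_min n \<tau>) = insert (Suc n) M"
    using \<tau>(2) by (simp add: cyc_min_Suc_fixed)
  moreover have "Suc n \<notin> cyc_min n \<tau>" using cyc_min_subset[OF \<tau>'] by auto
  ultimately have "cyc_min n \<tau> = M" using assms by (metis Diff_insert_absorb)
  then show "\<tau> \<in> perms_with_cyc_min n M" using \<tau>' by (simp add: perms_with_cyc_min_def)
next
  fix \<sigma> assume "\<sigma> \<in> perms_with_cyc_min n M"
  then show "\<sigma> \<in> perms_with_cyc_min (Suc n) (insert (Suc n) M)"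
    unfolding perms_with_cyc_min_def
    by (auto simp: cyc_min_Suc_fixed intro: permutes_subset)
qed

lemma card_perms_with_cyc_min_Suc:
  assumes "Suc n \<notin> M"
  shows "card (perms_with_cyc_min (Suc n) M) = n * card (perms_with_cyc_min n M)"
proof -
  let ?ins = "\<lambda>(\<sigma>, j). \<sigma> \<circ> transpose j (Suc n)"
  have "?ins ` (perms_with_cyc_min n M \<times> {1..n}) = perms_with_cyc_min (Suc n) M"
  proof (intro set_eqI iffI)
    fix \<tau> assume "\<tau> \<in> ?ins ` (perms_with_cyc_min n M \<times> {1..n})"
    then obtain \<sigma> j where \<sigma>: "\<sigma> permutes {1..n}" "cyc_min n \<sigma> = M" and j: "j \<in> {1..n}"
      and "\<tau> = \<sigma> \<circ> transpose j (Suc n)"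
      unfolding perms_with_cyc_min_def by force
    then show "\<tau> \<in> perms_with_cyc_min (Suc n) M"
      using permutes_Suc_compose_transpose(1)[OF \<sigma>(1) j]
        cyc_min_Suc_compose_transpose[OF \<sigma>(1) j]
      unfolding perms_with_cyc_min_def by simp
  next
    fix \<tau> assume "\<tau> \<in> perms_with_cyc_min (Suc n) M"
    then have \<tau>: "\<tau> permutes {1..Suc n}" "cyc_min (Suc n) \<tau> = M"
      unfolding perms_with_cyc_min_def by auto
    then have "\<tau> (Suc n) \<noteq> Suc n" using Suc_in_cyc_min_iff assms by blast
    then obtain \<sigma> j where "\<sigma> permutes {1..n}" "j \<in> {1..n}" "\<tau> = \<sigma> \<circ> transpose j (Suc n)"
      using \<tau>(1) by (elim permutes_Suc_not_fixedE)
    moreover from this have "cyc_min n \<sigma> = M"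
      using \<tau>(2) by (simp add: cyc_min_Suc_compose_transpose)
    ultimately show "\<tau> \<in> ?ins ` (perms_with_cyc_min n M \<times> {1..n})"
      unfolding perms_with_cyc_min_def by auto
  qed
  moreover have "inj_on ?ins (perms_with_cyc_min n M \<times> {1..n})"
    by (rule inj_on_subset[OF inj_on_compose_transpose_Suc]) (auto simp: perms_with_cyc_min_def)
  ultimately show ?thesis
    by (metis card_image card_cartesian_product card_atLeastAtMost diff_Suc_1 mult.commute)
qed

definition same_cyc_min_count :: "nat \<Rightarrow> nat \<Rightarrow> nat" where
  "same_cyc_min_count n k =
    (\<Sum>M | M \<subseteq> {1..n} \<and> card M = k. card (perms_with_cyc_min n M) ^ 2)"

lemma same_cyc_min_count_0: "same_cyc_min_count 0 k = (if k = 0 then 1 else 0)"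
proof -
  have "{M. M \<subseteq> {1..0::nat} \<and> card M = k} = (if k = 0 then {{}} else {})" by auto
  then show ?thesis by (simp add: same_cyc_min_count_def perms_with_cyc_min_0)
qed

lemma same_cyc_min_count_Suc_0: "same_cyc_min_count (Suc n) 0 = 0"
  unfolding same_cyc_min_count_def
  by (rule sum.neutral) (auto simp: perms_with_cyc_min_Suc_empty dest: finite_subset)

lemma same_cyc_min_count_Suc_Suc:
  "same_cyc_min_count (Suc n) (Suc k)
    = same_cyc_min_count n k + n\<^sup>2 * same_cyc_min_count n (Suc k)"
proof -
  have "{1..Suc n} = insert (Suc n) {1..n}" by (simp add: atLeastAtMostSuc_conv)
  then have "same_cyc_min_count (Suc n) (Suc k)
      = (\<Sum>M | M \<subseteq> {1..n} \<and> card M = k.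
           card (perms_with_cyc_min (Suc n) (insert (Suc n) M)) ^ 2)
      + (\<Sum>M | M \<subseteq> {1..n} \<and> card M = Suc k. card (perms_with_cyc_min (Suc n) M) ^ 2)"
    unfolding same_cyc_min_count_def by (simp add: sum_subsets_card_Suc_insert)
  also have "\<dots> = same_cyc_min_count n k + n\<^sup>2 * same_cyc_min_count n (Suc k)"
    unfolding same_cyc_min_count_def sum_distrib_left
  proof (intro arg_cong2[where f = "(+)"] sum.cong refl)
    fix M assume "M \<in> {M. M \<subseteq> {1..n} \<and> card M = k}"
    then have "Suc n \<notin> M" by auto
    then show "card (perms_with_cyc_min (Suc n) (insert (Suc n) M)) ^ 2
      = card (perms_with_cyc_min n M) ^ 2"
      by (simp add: perms_with_cyc_min_Suc_insert)
  next
    fix M assume "M \<in> {M. M \<subseteq> {1..n} \<and> card M = Suc k}"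
    then have "Suc n \<notin> M" by auto
    then show "card (perms_with_cyc_min (Suc n) M) ^ 2
      = n\<^sup>2 * card (perms_with_cyc_min n M) ^ 2"
      by (simp add: card_perms_with_cyc_min_Suc power_mult_distrib)
  qed
  finally show ?thesis .
qed

lemma u_eq_same_cyc_min_count: "u n k = (-1) ^ (n + k) * int (same_cyc_min_count n k)"
proof (induction n arbitrary: k)
  case 0
  then show ?case by (simp add: same_cyc_min_count_0)
next
  case (Suc n)
  show ?case
  proof (cases k)
    case 0
    then show ?thesis by (simp add: same_cyc_min_count_Suc_0)
  next
    case (Suc k')
    then show ?thesis
      using Suc.IH by (simp add: same_cyc_min_count_Suc_Suc algebra_simps)
  qed
qed

lemma card_same_cyc_min_pairs:
  "card {(\<sigma>, \<tau>). \<sigma> permutes {1..n} \<and> \<tau> permutes {1..n}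
      \<and> num_cycles n \<sigma> = k \<and> num_cycles n \<tau> = k \<and> cyc_min n \<sigma> = cyc_min n \<tau>}
   = same_cyc_min_count n k"
proof -
  let ?I = "{M. M \<subseteq> {1..n} \<and> card M = k}" and ?P = "perms_with_cyc_min n"
  have "{(\<sigma>, \<tau>). \<sigma> permutes {1..n} \<and> \<tau> permutes {1..n}
      \<and> num_cycles n \<sigma> = k \<and> num_cycles n \<tau> = k \<and> cyc_min n \<sigma> = cyc_min n \<tau>}
    = (\<Union>M\<in>?I. ?P M \<times> ?P M)"
    using cyc_min_subset
    by (fastforce simp: perms_with_cyc_min_def num_cycles_eq_card_cyc_min)
  moreover have "card (\<Union>M\<in>?I. ?P M \<times> ?P M) = (\<Sum>M\<in>?I. card (?P M \<times> ?P M))"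
  proof (rule card_UN_disjoint)
    show "finite ?I" by (rule finite_subset[of _ "Pow {1..n}"]) auto
    show "\<forall>M\<in>?I. finite (?P M \<times> ?P M)" by (simp add: finite_perms_with_cyc_min)
    show "\<forall>M\<in>?I. \<forall>M'\<in>?I. M \<noteq> M' \<longrightarrow> (?P M \<times> ?P M) \<inter> (?P M' \<times> ?P M') = {}"
      by (auto simp: perms_with_cyc_min_def)
  qed
  ultimately show ?thesis
    by (simp add: same_cyc_min_count_def card_cartesian_product power2_eq_square)
qed

theorem corollary17:
  fixes n k :: nat
  assumes "1 \<le> k" and "k \<le> n"
  shows "nat \<bar>u n k\<bar> = card {(\<sigma>, \<tau>). \<sigma> permutes {1..n} \<and> \<tau> permutes {1..n}
            \<and> num_cycles n \<sigma> = k \<and> num_cycles n \<tau> = k \<and> cyc_min n \<sigma> = cyc_min n \<tau>}"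
  \<comment> \<open>the identity holds for all \<open>n\<close> and \<open>k\<close>\<close>
  unfolding card_same_cyc_min_pairs u_eq_same_cyc_min_count by (simp add: abs_mult)

end
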